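(* Let $n\geqslant 2$ and $\alpha\in\mathbf{I}\mathbb{N}_{\infty}^n$. Then there exist unique elements $\sigma_l,\sigma_r$ of the group of units $H(\mathbb{I})$ of $\mathbf{I}\mathbb{N}_{\infty}^n$ such that $\sigma_l\alpha$ and $\alpha\sigma_r$ are idempotents of $\mathbf{I}\mathbb{N}_{\infty}^n$.
   Context: $\mathbb{N}=\{1,2,3,\ldots\}$, $n\geqslant 2$, and $\mathbb{N}^n$ carries the Euclidean metric $d$. A partial isometry of $\mathbb{N}^n$ is an injective partial map $\alpha\colon\mathbb{N}^n\rightharpoonup\mathbb{N}^n$ with $d((\mathbf{x})\alpha,(\mathbf{y})\alpha)=d(\mathbf{x},\mathbf{y})$ for all $\mathbf{x},\mathbf{y}\in\operatorname{dom}\alpha$; it is cofinite if $\mathbb{N}^n\setminus\operatorname{dom}\alpha$ and $\mathbb{N}^n\setminus\operatorname{ran}\alpha$ are finite. $\mathbf{I}\mathbb{N}_{\infty}^n$ is the monoid of all partial cofinite isometries of $\mathbb{N}^n$ under composition of partial maps written on the right: $\mathbf{x}(\alpha\beta)=(\mathbf{x}\alpha)\beta$ with $\operatorname{dom}(\alpha\beta)=\{\mathbf{x}\in\operatorname{dom}\alpha\colon \mathbf{x}\alpha\in\operatorname{dom}\beta\}$. Its identity is the identity map $\mathbb{I}$ of $\mathbb{N}^n$ and $H(\mathbb{I})$ is its group of units. *)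

theory Defs
  imports Complex_Main
begin

definition Pts :: "nat \<Rightarrow> nat list set" where
  "Pts n = {x. length x = n \<and> (\<forall>i<n. 1 \<le> x ! i)}"

definition edist :: "nat \<Rightarrow> nat list \<Rightarrow> nat list \<Rightarrow> real" where
  "edist n x y = sqrt (\<Sum>i<n. (real (x ! i) - real (y ! i))\<^sup>2)"

definition IN_inf :: "nat \<Rightarrow> (nat list \<rightharpoonup> nat list) set" where
  "IN_inf n = {\<alpha>. dom \<alpha> \<subseteq> Pts n \<and> ran \<alpha> \<subseteq> Pts n \<and> inj_on \<alpha> (dom \<alpha>)
     \<and> (\<forall>x\<in>dom \<alpha>. \<forall>y\<in>dom \<alpha>. edist n (the (\<alpha> x)) (the (\<alpha> y)) = edist n x y)
     \<and> finite (Pts n - dom \<alpha>) \<and> finite (Pts n - ran \<alpha>)}"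

text \<open>Composition written on the right: x(\<alpha>\<beta>) = (x\<alpha>)\<beta>.\<close>
definition pmult :: "(nat list \<rightharpoonup> nat list) \<Rightarrow> (nat list \<rightharpoonup> nat list) \<Rightarrow> (nat list \<rightharpoonup> nat list)" where
  "pmult \<alpha> \<beta> = \<beta> \<circ>\<^sub>m \<alpha>"

definition pid :: "nat \<Rightarrow> (nat list \<rightharpoonup> nat list)" where
  "pid n = (\<lambda>x. if x \<in> Pts n then Some x else None)"

definition units_IN :: "nat \<Rightarrow> (nat list \<rightharpoonup> nat list) set" where
  "units_IN n = {\<sigma> \<in> IN_inf n. \<exists>\<tau>\<in>IN_inf n. pmult \<sigma> \<tau> = pid n \<and> pmult \<tau> \<sigma> = pid n}"

definition idem_IN :: "(nat list \<rightharpoonup> nat list) \<Rightarrow> bool" where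
  "idem_IN \<epsilon> \<longleftrightarrow> pmult \<epsilon> \<epsilon> = \<epsilon>"

end

theory Submission
  imports Defs
begin

text \<open>
  A partial isometry of \<open>\<nat>\<^sup>n\<close> preserves squared distances, hence by polarization the
  inner products of differences. Applied to a point \<open>z\<close> and its unit neighbours
  \<open>z + e\<^sub>i\<close>, this shows that \<open>\<alpha>\<close> acts on its domain as \<open>x \<mapsto> P(s\<cdot>x) + c\<close> for a
  coordinate permutation \<open>P\<close>, signs \<open>s\<^sub>i = \<plusminus>1\<close> and a translation \<open>c\<close>. Since the
  domain and the range are cofinite, every coordinate value \<open>t \<ge> 1\<close> occurs in both
  (with another coordinate large, which needs \<open>n \<ge> 2\<close>); this forces \<open>s = 1\<close> and \<open>c = 0\<close>.
  So \<open>\<alpha>\<close> is a restriction of a coordinate permutation \<open>\<tau>\<close>, and the units are exactly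
  the coordinate permutations. An injective idempotent is a partial identity, and a
  coordinate permutation fixing a point with distinct coordinates is the identity;
  hence \<open>\<sigma>\<alpha>\<close>, resp. \<open>\<alpha>\<sigma>\<close>, is idempotent exactly for \<open>\<sigma> = \<tau>\<^sup>-\<^sup>1\<close>.
\<close>

definition sqdist :: "nat \<Rightarrow> nat list \<Rightarrow> nat list \<Rightarrow> int" where
  "sqdist n x y = (\<Sum>k<n. (int (x!k) - int (y!k))^2)"

definition inner_at :: "nat \<Rightarrow> nat list \<Rightarrow> nat list \<Rightarrow> nat list \<Rightarrow> int" where
  "inner_at n w x y = (\<Sum>k<n. (int (x!k) - int (w!k)) * (int (y!k) - int (w!k)))"

lemma edist_eq_sqrt_sqdist: "edist n x y = sqrt (real_of_int (sqdist n x y))"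
  unfolding edist_def sqdist_def by simp

lemma inner_at_polarization: "2 * inner_at n w x y = sqdist n x w + sqdist n y w - sqdist n x y"
proof -
  have "sqdist n x w + sqdist n y w - sqdist n x y
      = (\<Sum>k<n. (int (x!k) - int (w!k))^2 + (int (y!k) - int (w!k))^2 - (int (x!k) - int (y!k))^2)"
    unfolding sqdist_def by (simp add: sum.distrib sum_subtractf)
  also have "\<dots> = (\<Sum>k<n. 2 * ((int (x!k) - int (w!k)) * (int (y!k) - int (w!k))))"
    by (rule sum.cong) (auto simp: power2_eq_square algebra_simps)
  finally show ?thesis by (simp add: inner_at_def sum_distrib_left)
qed

lemma IN_inf_sqdist:
  assumes "\<alpha> \<in> IN_inf n" "x \<in> dom \<alpha>" "y \<in> dom \<alpha>"
  shows "sqdist n (the (\<alpha> x)) (the (\<alpha> y)) = sqdist n x y"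
proof -
  have "edist n (the (\<alpha> x)) (the (\<alpha> y)) = edist n x y"
    using assms unfolding IN_inf_def by blast
  then show ?thesis by (simp add: edist_eq_sqrt_sqdist)
qed

lemma IN_inf_inner_at:
  assumes "\<alpha> \<in> IN_inf n" "w \<in> dom \<alpha>" "x \<in> dom \<alpha>" "y \<in> dom \<alpha>"
  shows "inner_at n (the (\<alpha> w)) (the (\<alpha> x)) (the (\<alpha> y)) = inner_at n w x y"
  using inner_at_polarization[of n "the (\<alpha> w)" "the (\<alpha> x)" "the (\<alpha> y)"]
    inner_at_polarization[of n w x y] IN_inf_sqdist[OF assms(1)] assms(2-4) by simp

lemma inner_at_unit_direction:
  assumes "k < n" and "\<forall>j<n. int (y!j) - int (w!j) = (if j = k then s else 0)"
  shows "inner_at n w x y = s * (int (x!k) - int (w!k))"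
proof -
  have "inner_at n w x y = (\<Sum>j<n. if j = k then s * (int (x!k) - int (w!k)) else 0)"
    unfolding inner_at_def by (rule sum.cong) (use assms(2) in auto)
  then show ?thesis using assms(1) by simp
qed

lemma int_sum_squares_eq_1:
  fixes g :: "nat \<Rightarrow> int"
  assumes sum: "(\<Sum>j<n. (g j)^2) = 1"
  shows "\<exists>k<n. \<exists>s. (s = 1 \<or> s = -1) \<and> (\<forall>j<n. g j = (if j = k then s else 0))"
proof -
  obtain k where k: "k < n" "g k \<noteq> 0"
    using sum by (metis (no_types, lifting) lessThan_iff sum.neutral zero_neq_one power_zero_numeral)
  have split: "(\<Sum>j<n. (g j)^2) = (g k)^2 + (\<Sum>j\<in>{..<n}-{k}. (g j)^2)"
    using k by (simp add: sum.remove)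
  have rest_nonneg: "(\<Sum>j\<in>{..<n}-{k}. (g j)^2) \<ge> 0" by (simp add: sum_nonneg)
  have "(g k)^2 > 0" using k(2) by simp
  then have gk: "(g k)^2 = 1" using split rest_nonneg sum by linarith
  then have rest: "(\<Sum>j\<in>{..<n}-{k}. (g j)^2) = 0" using split sum by linarith
  have "g j = 0" if "j < n" "j \<noteq> k" for j
    using rest sum_nonneg_eq_0_iff[of "{..<n}-{k}" "\<lambda>j. (g j)^2"] that by simp
  moreover have "g k = 1 \<or> g k = -1" using gk by (simp add: power2_eq_1_iff)
  ultimately show ?thesis using k(1) by (intro exI[of _ k] exI[of _ "g k"]) auto
qed

lemma IN_inf_unit_step:
  assumes "\<alpha> \<in> IN_inf n" "z \<in> dom \<alpha>" "z' \<in> dom \<alpha>" "sqdist n z' z = 1"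
  shows "\<exists>k<n. \<exists>s. (s = 1 \<or> s = -1) \<and>
           (\<forall>j<n. int (the (\<alpha> z') ! j) - int (the (\<alpha> z) ! j) = (if j = k then s else 0))"
  using int_sum_squares_eq_1[of "\<lambda>j. int (the (\<alpha> z') ! j) - int (the (\<alpha> z) ! j)" n]
    IN_inf_sqdist[OF assms(1,3,2)] assms(4) by (simp add: sqdist_def)

lemma IN_inf_signed_coordinate_permutation:
  assumes \<alpha>: "\<alpha> \<in> IN_inf n" and z: "z \<in> dom \<alpha>"
    and step: "\<And>i. i < n \<Longrightarrow> z[i := Suc (z!i)] \<in> dom \<alpha>"
  shows "\<exists>\<pi> s. inj_on \<pi> {..<n} \<and> (\<forall>i<n. \<pi> i < n \<and> (s i = 1 \<or> s i = -1)) \<and>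
     (\<forall>x\<in>dom \<alpha>. \<forall>i<n. int (the (\<alpha> x) ! \<pi> i) - int (the (\<alpha> z) ! \<pi> i) = s i * (int (x!i) - int (z!i)))"
proof -
  define e where "e i = z[i := Suc (z!i)]" for i
  have "length z = n" using \<alpha> z by (auto simp: IN_inf_def Pts_def)
  then have e_diff: "\<forall>j<n. int (e i ! j) - int (z!j) = (if j = i then 1 else 0)" if "i < n" for i
    using that by (auto simp: e_def nth_list_update)
  have "\<exists>k<n. \<exists>s. (s = 1 \<or> s = -1) \<and>
          (\<forall>j<n. int (the (\<alpha> (e i)) ! j) - int (the (\<alpha> z) ! j) = (if j = k then s else 0))"
    if i: "i < n" for i
  proof (rule IN_inf_unit_step[OF \<alpha> z])
    show "e i \<in> dom \<alpha>" using step[OF i] by (simp add: e_def)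
    have "sqdist n (e i) z = (\<Sum>j<n. if j = i then 1 else 0)"
      unfolding sqdist_def by (rule sum.cong) (use e_diff[OF i] in auto)
    then show "sqdist n (e i) z = 1" using i by simp
  qed
  then obtain \<pi> s where \<pi>: "\<forall>i<n. \<pi> i < n \<and> (s i = 1 \<or> s i = -1)"
    and image_step: "\<forall>i<n. \<forall>j<n. int (the (\<alpha> (e i)) ! j) - int (the (\<alpha> z) ! j) = (if j = \<pi> i then s i else 0)"
    by metis
  have affine: "int (the (\<alpha> x) ! \<pi> i) - int (the (\<alpha> z) ! \<pi> i) = s i * (int (x!i) - int (z!i))"
    if x: "x \<in> dom \<alpha>" and i: "i < n" for x i
  proof -
    have "s i * (int (the (\<alpha> x) ! \<pi> i) - int (the (\<alpha> z) ! \<pi> i))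
        = inner_at n (the (\<alpha> z)) (the (\<alpha> x)) (the (\<alpha> (e i)))"
      using inner_at_unit_direction[of "\<pi> i" n "the (\<alpha> (e i))" "the (\<alpha> z)" "s i"] \<pi> image_step i
      by simp
    also have "\<dots> = inner_at n z x (e i)"
      using IN_inf_inner_at[OF \<alpha> z x] step[OF i] by (simp add: e_def)
    also have "\<dots> = int (x!i) - int (z!i)"
      using inner_at_unit_direction[OF i e_diff[OF i]] by simp
    finally have "s i * s i * (int (the (\<alpha> x) ! \<pi> i) - int (the (\<alpha> z) ! \<pi> i)) = s i * (int (x!i) - int (z!i))"
      by (simp add: mult.assoc)
    moreover have "s i * s i = 1" using \<pi> i by auto
    ultimately show ?thesis by simp
  qed
  have "inj_on \<pi> {..<n}"
  proof (rule inj_onI)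
    fix i j assume i: "i \<in> {..<n}" and j: "j \<in> {..<n}" and eq: "\<pi> i = \<pi> j"
    have "s j = int (the (\<alpha> (e j)) ! \<pi> i) - int (the (\<alpha> z) ! \<pi> i)"
      using image_step \<pi> i j eq by auto
    also have "\<dots> = s i * (int (e j ! i) - int (z!i))"
      using affine[of "e j" i] step[of j] i j by (simp add: e_def)
    also have "\<dots> = s i * (if i = j then 1 else 0)" using e_diff i j by simp
    finally show "i = j" using \<pi> j by (cases "i = j") auto
  qed
  then show ?thesis using \<pi> affine by blast
qed

lemma affine_unit_map_eq_id:
  fixes f g :: "'a \<Rightarrow> int"
  assumes affine: "\<forall>x\<in>D. f x = s * g x + c" and s: "s = 1 \<or> s = -1"
    and f_pos: "\<forall>x\<in>D. 1 \<le> f x" and g_pos: "\<forall>x\<in>D. 1 \<le> g x"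
    and g_onto: "\<forall>t\<ge>1. \<exists>x\<in>D. g x = t" and f_hits_1: "\<exists>x\<in>D. f x = 1"
  shows "s = 1 \<and> c = 0"
proof -
  have "s = 1"
  proof (rule ccontr)
    assume "s \<noteq> 1"
    obtain x where "x \<in> D" "g x = max 1 c" using g_onto[rule_format, of "max 1 c"] by auto
    then show False using affine f_pos \<open>s \<noteq> 1\<close> s by force
  qed
  moreover obtain x where "x \<in> D" "g x = 1" using g_onto by blast
  moreover obtain y where "y \<in> D" "f y = 1" using f_hits_1 by blast
  ultimately show ?thesis using affine f_pos g_pos by force
qed

lemma cofinite_Pts_contains_large:
  assumes "finite (Pts n - S)"
  shows "\<exists>M. \<forall>x\<in>Pts n. (\<exists>i<n. M < x!i) \<longrightarrow> x \<in> S"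
proof (intro exI ballI impI)
  fix x assume x: "x \<in> Pts n" and "\<exists>i<n. Max (sum_list ` (Pts n - S)) < x!i"
  then obtain i where i: "i < length x" "Max (sum_list ` (Pts n - S)) < x!i"
    by (auto simp: Pts_def)
  show "x \<in> S"
  proof (rule ccontr)
    assume "x \<notin> S"
    then have "sum_list x \<le> Max (sum_list ` (Pts n - S))" using assms x by simp
    then show False using elem_le_sum_list[OF i(1)] i(2) by simp
  qed
qed

lemma cofinite_Pts_coordinate_values:
  assumes "2 \<le> n" "finite (Pts n - S)" "i < n" "1 \<le> t"
  shows "\<exists>x\<in>S. x!i = t"
proof -
  obtain M where M: "\<forall>x\<in>Pts n. (\<exists>i<n. M < x!i) \<longrightarrow> x \<in> S"
    using cofinite_Pts_contains_large[OF assms(2)] by blast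
  define j :: nat where "j = (if i = 0 then 1 else 0)"
  define x where "x = (replicate n (Suc M))[i := t]"
  have "j < n" "M < x!j" "x!i = t" "x \<in> Pts n"
    using assms by (auto simp: j_def x_def Pts_def nth_list_update)
  then show ?thesis using M by blast
qed

lemma cofinite_Pts_distinct_point:
  assumes "0 < n" "finite (Pts n - S)"
  shows "\<exists>x\<in>Pts n. distinct x \<and> (\<forall>p. (\<forall>k<n. p k < n) \<longrightarrow> map (\<lambda>k. x ! p k) [0..<n] \<in> S)"
proof -
  obtain M where M: "\<forall>x\<in>Pts n. (\<exists>i<n. M < x!i) \<longrightarrow> x \<in> S"
    using cofinite_Pts_contains_large[OF assms(2)] by blast
  define x where "x = map (\<lambda>k. Suc M + k) [0..<n]"
  have x_nth: "x ! k = Suc M + k" if "k < n" for k using that by (simp add: x_def)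
  have "map (\<lambda>k. x ! p k) [0..<n] \<in> S" if p: "\<forall>k<n. p k < n" for p
  proof -
    have "map (\<lambda>k. x ! p k) [0..<n] \<in> Pts n" "M < map (\<lambda>k. x ! p k) [0..<n] ! 0"
      using p assms(1) by (auto simp: x_nth Pts_def)
    then show ?thesis using M assms(1) by blast
  qed
  moreover have "x \<in> Pts n" "distinct x" by (auto simp: x_def Pts_def distinct_map inj_on_def)
  ultimately show ?thesis by blast
qed

lemma IN_inf_affine_coordinate_trivial:
  assumes n: "2 \<le> n" and \<alpha>: "\<alpha> \<in> IN_inf n" and i: "i < n" and k: "k < n"
    and affine: "\<forall>x\<in>dom \<alpha>. int (the (\<alpha> x) ! k) = s * int (x!i) + c" and s: "s = 1 \<or> s = -1"
  shows "s = 1 \<and> c = 0"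
proof (rule affine_unit_map_eq_id[OF affine s])
  have dom: "dom \<alpha> \<subseteq> Pts n" "finite (Pts n - dom \<alpha>)"
    and ran: "ran \<alpha> \<subseteq> Pts n" "finite (Pts n - ran \<alpha>)"
    using \<alpha> by (auto simp: IN_inf_def)
  show "\<forall>x\<in>dom \<alpha>. 1 \<le> int (the (\<alpha> x) ! k)"
    using ran(1) k by (force simp: Pts_def ran_def)
  show "\<forall>x\<in>dom \<alpha>. 1 \<le> int (x ! i)" using dom(1) i by (force simp: Pts_def)
  show "\<forall>t\<ge>1. \<exists>x\<in>dom \<alpha>. int (x ! i) = t"
  proof (intro allI impI)
    fix t :: int assume "1 \<le> t"
    then have "1 \<le> nat t" by simp
    then obtain x where "x \<in> dom \<alpha>" "x ! i = nat t"
      using cofinite_Pts_coordinate_values[OF n dom(2) i] by blast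
    moreover have "int (x ! i) = t" using \<open>x ! i = nat t\<close> \<open>1 \<le> t\<close> by simp
    ultimately show "\<exists>x\<in>dom \<alpha>. int (x ! i) = t" by blast
  qed
  obtain y where "y \<in> ran \<alpha>" "y ! k = 1"
    using cofinite_Pts_coordinate_values[OF n ran(2) k, of 1] by auto
  then obtain x where "\<alpha> x = Some y" by (auto simp: ran_def)
  then show "\<exists>x\<in>dom \<alpha>. int (the (\<alpha> x) ! k) = 1" using \<open>y ! k = 1\<close> by force
qed

lemma IN_inf_coordinate_permutation:
  assumes n: "2 \<le> n" and \<alpha>: "\<alpha> \<in> IN_inf n"
  shows "\<exists>\<pi>. bij_betw \<pi> {..<n} {..<n} \<and> (\<forall>x\<in>dom \<alpha>. \<forall>i<n. the (\<alpha> x) ! \<pi> i = x ! i)"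
proof -
  obtain M where M: "\<forall>x\<in>Pts n. (\<exists>i<n. M < x!i) \<longrightarrow> x \<in> dom \<alpha>"
    using cofinite_Pts_contains_large[of n "dom \<alpha>"] \<alpha> by (auto simp: IN_inf_def)
  then have large: "x \<in> dom \<alpha>" if "x \<in> Pts n" "i < n" "M < x ! i" for x i
    using that by blast
  define z where "z = replicate n (Suc M)"
  have "z \<in> dom \<alpha>" using large[of z 0] n by (simp add: z_def Pts_def)
  moreover have "z[i := Suc (z!i)] \<in> dom \<alpha>" if "i < n" for i
    using large[of "z[i := Suc (z!i)]" i] that by (simp add: z_def Pts_def nth_list_update)
  ultimately obtain \<pi> s where inj: "inj_on \<pi> {..<n}" and \<pi>: "\<forall>i<n. \<pi> i < n \<and> (s i = 1 \<or> s i = -1)"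
    and affine: "\<forall>x\<in>dom \<alpha>. \<forall>i<n. int (the (\<alpha> x) ! \<pi> i) - int (the (\<alpha> z) ! \<pi> i) = s i * (int (x!i) - int (z!i))"
    using IN_inf_signed_coordinate_permutation[OF \<alpha>] by metis
  have "int (the (\<alpha> x) ! \<pi> i) = int (x ! i)" if x: "x \<in> dom \<alpha>" and i: "i < n" for x i
  proof -
    have "\<forall>x\<in>dom \<alpha>. int (the (\<alpha> x) ! \<pi> i) = s i * int (x!i) + (int (the (\<alpha> z) ! \<pi> i) - s i * int (z!i))"
      using affine i by (auto simp: algebra_simps)
    then have "s i = 1 \<and> int (the (\<alpha> z) ! \<pi> i) - s i * int (z!i) = 0"
      using IN_inf_affine_coordinate_trivial[OF n \<alpha> i] \<pi> i by blast
    then show ?thesis using affine[rule_format, OF x i] by simp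
  qed
  then have "\<forall>x\<in>dom \<alpha>. \<forall>i<n. the (\<alpha> x) ! \<pi> i = x ! i" by simp
  moreover have "bij_betw \<pi> {..<n} {..<n}"
    using endo_inj_surj[of "{..<n}" \<pi>] inj \<pi> by (auto simp: bij_betw_def)
  ultimately show ?thesis by blast
qed

definition coord_perm :: "nat \<Rightarrow> (nat \<Rightarrow> nat) \<Rightarrow> nat list \<rightharpoonup> nat list" where
  "coord_perm n p x = (if x \<in> Pts n then Some (map (\<lambda>k. x ! p k) [0..<n]) else None)"

lemma dom_coord_perm [simp]: "dom (coord_perm n p) = Pts n"
  by (auto simp: coord_perm_def dom_def)

lemma coord_perm_Pts: "\<forall>k<n. p k < n \<Longrightarrow> x \<in> Pts n \<Longrightarrow> map (\<lambda>k. x ! p k) [0..<n] \<in> Pts n"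
  by (auto simp: Pts_def)

lemma coord_perm_cong: "\<forall>k<n. p k = p' k \<Longrightarrow> coord_perm n p = coord_perm n p'"
  by (auto simp: coord_perm_def)

lemma coord_perm_id: "\<forall>k<n. p k = k \<Longrightarrow> coord_perm n p = pid n"
  by (rule ext) (auto simp: coord_perm_def pid_def Pts_def intro!: nth_equalityI)

lemma pmult_coord_perm:
  assumes "\<forall>k<n. p k < n" "\<forall>k<n. q k < n"
  shows "pmult (coord_perm n p) (coord_perm n q) = coord_perm n (p \<circ> q)"
  using assms coord_perm_Pts[OF assms(1)] by (auto simp: pmult_def coord_perm_def)

lemma IN_inf_le_coord_perm:
  assumes "2 \<le> n" "\<alpha> \<in> IN_inf n"
  shows "\<exists>q. bij_betw q {..<n} {..<n} \<and> \<alpha> \<subseteq>\<^sub>m coord_perm n q"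
proof -
  obtain \<pi> where \<pi>: "bij_betw \<pi> {..<n} {..<n}" and coord: "\<forall>x\<in>dom \<alpha>. \<forall>i<n. the (\<alpha> x) ! \<pi> i = x ! i"
    using IN_inf_coordinate_permutation[OF assms] by blast
  define q where "q = inv_into {..<n} \<pi>"
  have "\<alpha> x = Some (map (\<lambda>k. x ! q k) [0..<n])" if x: "x \<in> dom \<alpha>" for x
  proof -
    have "the (\<alpha> x) \<in> Pts n" using x assms(2) by (auto simp: IN_inf_def ran_def)
    moreover have "the (\<alpha> x) ! k = x ! q k" if "k < n" for k
      using coord x bij_betw_inv_into_right[OF \<pi>] bij_betw_inv_into[OF \<pi>] that
      by (metis bij_betwE lessThan_iff q_def)
    ultimately show ?thesis using x by (auto simp: Pts_def intro!: nth_equalityI)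
  qed
  moreover have "dom \<alpha> \<subseteq> Pts n" using assms(2) by (simp add: IN_inf_def)
  ultimately have "\<alpha> \<subseteq>\<^sub>m coord_perm n q" by (auto simp: map_le_def coord_perm_def)
  then show ?thesis using bij_betw_inv_into[OF \<pi>] q_def by blast
qed

lemma pmult_coord_perm_inv:
  assumes p: "bij_betw p {..<n} {..<n}"
  shows "pmult (coord_perm n p) (coord_perm n (inv_into {..<n} p)) = pid n"
    and "pmult (coord_perm n (inv_into {..<n} p)) (coord_perm n p) = pid n"
proof -
  have p_into: "\<forall>k<n. p k < n" and r_into: "\<forall>k<n. inv_into {..<n} p k < n"
    using bij_betwE[OF p] bij_betwE[OF bij_betw_inv_into[OF p]] by auto
  have "\<forall>k<n. (p \<circ> inv_into {..<n} p) k = k" "\<forall>k<n. (inv_into {..<n} p \<circ> p) k = k"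
    using bij_betw_inv_into_right[OF p] bij_betw_inv_into_left[OF p] by auto
  then show "pmult (coord_perm n p) (coord_perm n (inv_into {..<n} p)) = pid n"
    and "pmult (coord_perm n (inv_into {..<n} p)) (coord_perm n p) = pid n"
    using pmult_coord_perm[OF p_into r_into] pmult_coord_perm[OF r_into p_into] coord_perm_id
    by simp_all
qed

lemma coord_perm_in_IN_inf:
  assumes p: "bij_betw p {..<n} {..<n}"
  shows "coord_perm n p \<in> IN_inf n"
proof -
  define r where "r = inv_into {..<n} p"
  have left_inv: "(coord_perm n r \<circ>\<^sub>m coord_perm n p) x = Some x"
    and right_inv: "(coord_perm n p \<circ>\<^sub>m coord_perm n r) x = Some x" if "x \<in> Pts n" for x
    using fun_cong[OF pmult_coord_perm_inv(1)[OF p], of x] fun_cong[OF pmult_coord_perm_inv(2)[OF p], of x] that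
    by (simp_all add: r_def pmult_def pid_def)
  have "ran (coord_perm n p) = Pts n"
  proof
    show "ran (coord_perm n p) \<subseteq> Pts n"
      using coord_perm_Pts bij_betwE[OF p] by (auto simp: ran_def coord_perm_def split: if_splits)
    show "Pts n \<subseteq> ran (coord_perm n p)"
    proof
      fix y assume "y \<in> Pts n"
      then have "(coord_perm n p \<circ>\<^sub>m coord_perm n r) y = Some y" by (rule right_inv)
      then show "y \<in> ran (coord_perm n p)" by (auto simp: ran_def map_comp_def split: option.splits)
    qed
  qed
  moreover have "inj_on (coord_perm n p) (Pts n)"
  proof (rule inj_onI)
    fix x y assume "x \<in> Pts n" "y \<in> Pts n" and eq: "coord_perm n p x = coord_perm n p y"
    have "Some x = (coord_perm n r \<circ>\<^sub>m coord_perm n p) x" using left_inv \<open>x \<in> Pts n\<close> by simp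
    also have "\<dots> = (coord_perm n r \<circ>\<^sub>m coord_perm n p) y" using eq by (simp add: map_comp_def)
    also have "\<dots> = Some y" using left_inv \<open>y \<in> Pts n\<close> by simp
    finally show "x = y" by simp
  qed
  moreover have "edist n (the (coord_perm n p x)) (the (coord_perm n p y)) = edist n x y"
    if "x \<in> Pts n" "y \<in> Pts n" for x y
  proof -
    have "(\<Sum>k<n. (real (x ! p k) - real (y ! p k))\<^sup>2) = (\<Sum>k<n. (real (x!k) - real (y!k))\<^sup>2)"
      using sum.reindex_bij_betw[OF p, of "\<lambda>k. (real (x!k) - real (y!k))\<^sup>2"] by simp
    then show ?thesis using that by (simp add: coord_perm_def edist_def)
  qed
  ultimately show ?thesis by (simp add: IN_inf_def)
qed

lemma coord_perm_in_units:
  assumes p: "bij_betw p {..<n} {..<n}"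
  shows "coord_perm n p \<in> units_IN n"
  using coord_perm_in_IN_inf[OF p] coord_perm_in_IN_inf[OF bij_betw_inv_into[OF p]]
    pmult_coord_perm_inv[OF p] by (auto simp: units_IN_def)

lemma dom_units_IN:
  assumes "\<sigma> \<in> units_IN n"
  shows "dom \<sigma> = Pts n"
proof -
  obtain \<tau> where \<sigma>: "\<sigma> \<in> IN_inf n" and \<tau>: "pmult \<sigma> \<tau> = pid n" using assms by (auto simp: units_IN_def)
  have "x \<in> dom \<sigma>" if "x \<in> Pts n" for x
    using fun_cong[OF \<tau>, of x] that by (auto simp: pmult_def pid_def map_comp_def split: option.splits)
  then show ?thesis using \<sigma> by (auto simp: IN_inf_def)
qed

lemma units_IN_eq_coord_perm:
  assumes "2 \<le> n" "\<sigma> \<in> units_IN n"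
  shows "\<exists>p. bij_betw p {..<n} {..<n} \<and> \<sigma> = coord_perm n p"
proof -
  have "\<sigma> \<in> IN_inf n" using assms(2) by (simp add: units_IN_def)
  then obtain p where p: "bij_betw p {..<n} {..<n}" and le: "\<sigma> \<subseteq>\<^sub>m coord_perm n p"
    using IN_inf_le_coord_perm[OF assms(1)] by blast
  have "coord_perm n p \<subseteq>\<^sub>m \<sigma>"
    using le dom_units_IN[OF assms(2)] by (auto simp: map_le_def)
  then show ?thesis using p le map_le_antisym by blast
qed

lemma pmult_mono:
  assumes "\<alpha> \<subseteq>\<^sub>m \<alpha>'" "\<beta> \<subseteq>\<^sub>m \<beta>'"
  shows "pmult \<alpha> \<beta> \<subseteq>\<^sub>m pmult \<alpha>' \<beta>'"
  unfolding map_le_def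
proof
  fix x assume "x \<in> dom (pmult \<alpha> \<beta>)"
  then obtain y z where "\<alpha> x = Some y" "\<beta> y = Some z"
    by (auto simp: pmult_def map_comp_def split: option.splits)
  moreover have "\<alpha>' x = Some y" "\<beta>' y = Some z"
    using calculation assms by (metis domI map_le_def)+
  ultimately show "pmult \<alpha> \<beta> x = pmult \<alpha>' \<beta>' x" by (simp add: pmult_def)
qed

lemma idem_IN_if_le_pid:
  assumes "\<beta> \<subseteq>\<^sub>m pid n"
  shows "idem_IN \<beta>"
  unfolding idem_IN_def pmult_def
proof
  fix x show "(\<beta> \<circ>\<^sub>m \<beta>) x = \<beta> x"
  proof (cases "\<beta> x")
    case (Some y)
    then have "y = x" using assms by (metis domI map_le_def option.distinct(1) option.inject pid_def)
    then show ?thesis using Some by simp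
  qed simp
qed

lemma idem_IN_submap_fixed_point:
  assumes le: "\<beta> \<subseteq>\<^sub>m \<gamma>" and inj: "inj_on \<gamma> (dom \<gamma>)" and idem: "idem_IN \<beta>" and x: "x \<in> dom \<beta>"
  shows "\<gamma> x = Some x"
proof -
  obtain y where y: "\<beta> x = Some y" using x by auto
  then have "\<beta> y = Some y"
    using fun_cong[OF idem[unfolded idem_IN_def pmult_def], of x] by simp
  then have "\<gamma> y = Some y" "\<gamma> x = Some y" using le y by (metis domI map_le_def)+
  then have "x = y" using inj by (metis domI inj_onD)
  then show ?thesis using \<open>\<gamma> x = Some y\<close> by simp
qed

lemma coord_perm_fixed_point:
  assumes "coord_perm n p x = Some x" "distinct x" "\<forall>k<n. p k < n"
  shows "\<forall>k<n. p k = k"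
proof -
  have x: "length x = n" and eq: "map (\<lambda>k. x ! p k) [0..<n] = x"
    using assms(1) by (auto simp: coord_perm_def Pts_def split: if_splits)
  have "x ! p k = x ! k" if "k < n" for k
    using arg_cong[OF eq, of "\<lambda>y. y ! k"] that by simp
  then show ?thesis using assms(2,3) x by (simp add: nth_eq_iff_index_eq)
qed

lemma idem_IN_le_coord_perm_id:
  assumes le: "\<beta> \<subseteq>\<^sub>m coord_perm n r" and r: "bij_betw r {..<n} {..<n}"
    and idem: "idem_IN \<beta>" and x: "x \<in> dom \<beta>" "distinct x"
  shows "\<forall>k<n. r k = k"
proof -
  have "inj_on (coord_perm n r) (dom (coord_perm n r))"
    using coord_perm_in_IN_inf[OF r] by (simp add: IN_inf_def)
  then have "coord_perm n r x = Some x" using idem_IN_submap_fixed_point[OF le _ idem x(1)] by blast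
  then show ?thesis using coord_perm_fixed_point x(2) bij_betwE[OF r] by blast
qed

lemma idem_IN_left_unit_iff:
  assumes n: "2 \<le> n" and \<alpha>: "\<alpha> \<in> IN_inf n" and q: "bij_betw q {..<n} {..<n}"
    and le: "\<alpha> \<subseteq>\<^sub>m coord_perm n q" and \<sigma>: "\<sigma> \<in> units_IN n"
  shows "idem_IN (pmult \<sigma> \<alpha>) \<longleftrightarrow> \<sigma> = coord_perm n (inv_into {..<n} q)"
proof
  assume idem: "idem_IN (pmult \<sigma> \<alpha>)"
  obtain p where p: "bij_betw p {..<n} {..<n}" and \<sigma>_eq: "\<sigma> = coord_perm n p"
    using units_IN_eq_coord_perm[OF n \<sigma>] by blast
  have p_into: "\<forall>k<n. p k < n" and q_into: "\<forall>k<n. q k < n"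
    using bij_betwE[OF p] bij_betwE[OF q] by auto
  have le_pq: "pmult \<sigma> \<alpha> \<subseteq>\<^sub>m coord_perm n (p \<circ> q)"
    using pmult_mono[OF map_le_refl[of \<sigma>] le] pmult_coord_perm[OF p_into q_into] \<sigma>_eq by simp
  obtain x where x: "x \<in> Pts n" "distinct x"
    and perms: "\<forall>p. (\<forall>k<n. p k < n) \<longrightarrow> map (\<lambda>k. x ! p k) [0..<n] \<in> dom \<alpha>"
    using cofinite_Pts_distinct_point[of n "dom \<alpha>"] n \<alpha> by (auto simp: IN_inf_def)
  have "x \<in> dom (pmult \<sigma> \<alpha>)"
    using x(1) perms p_into by (auto simp: \<sigma>_eq pmult_def coord_perm_def)
  then have "\<forall>k<n. p (q k) = k"
    using idem_IN_le_coord_perm_id[OF le_pq bij_betw_trans[OF q p] idem _ x(2)] by simp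
  then have "\<forall>k<n. p k = inv_into {..<n} q k"
    using bij_betw_inv_into_right[OF q] bij_betwE[OF bij_betw_inv_into[OF q]] by (metis lessThan_iff)
  then show "\<sigma> = coord_perm n (inv_into {..<n} q)" using \<sigma>_eq coord_perm_cong by blast
next
  assume "\<sigma> = coord_perm n (inv_into {..<n} q)"
  then have "pmult \<sigma> \<alpha> \<subseteq>\<^sub>m pid n"
    using pmult_mono[OF map_le_refl[of \<sigma>] le] pmult_coord_perm_inv(2)[OF q] by simp
  then show "idem_IN (pmult \<sigma> \<alpha>)" by (rule idem_IN_if_le_pid)
qed

lemma idem_IN_right_unit_iff:
  assumes n: "2 \<le> n" and \<alpha>: "\<alpha> \<in> IN_inf n" and q: "bij_betw q {..<n} {..<n}"
    and le: "\<alpha> \<subseteq>\<^sub>m coord_perm n q" and \<sigma>: "\<sigma> \<in> units_IN n"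
  shows "idem_IN (pmult \<alpha> \<sigma>) \<longleftrightarrow> \<sigma> = coord_perm n (inv_into {..<n} q)"
proof
  assume idem: "idem_IN (pmult \<alpha> \<sigma>)"
  obtain p where p: "bij_betw p {..<n} {..<n}" and \<sigma>_eq: "\<sigma> = coord_perm n p"
    using units_IN_eq_coord_perm[OF n \<sigma>] by blast
  have p_into: "\<forall>k<n. p k < n" and q_into: "\<forall>k<n. q k < n"
    using bij_betwE[OF p] bij_betwE[OF q] by auto
  have le_qp: "pmult \<alpha> \<sigma> \<subseteq>\<^sub>m coord_perm n (q \<circ> p)"
    using pmult_mono[OF le map_le_refl[of \<sigma>]] pmult_coord_perm[OF q_into p_into] \<sigma>_eq by simp
  obtain x where x: "x \<in> Pts n" "distinct x"
    and perms: "\<forall>p. (\<forall>k<n. p k < n) \<longrightarrow> map (\<lambda>k. x ! p k) [0..<n] \<in> dom \<alpha>"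
    using cofinite_Pts_distinct_point[of n "dom \<alpha>"] n \<alpha> by (auto simp: IN_inf_def)
  have "length x = n" using x(1) by (simp add: Pts_def)
  then have "x \<in> dom \<alpha>" using perms[rule_format, of id] map_nth[of x] by simp
  then obtain y where "\<alpha> x = Some y" by auto
  moreover have "y \<in> Pts n" using calculation \<alpha> by (auto simp: IN_inf_def ran_def)
  ultimately have "x \<in> dom (pmult \<alpha> \<sigma>)" by (simp add: \<sigma>_eq pmult_def coord_perm_def dom_def)
  then have "\<forall>k<n. q (p k) = k"
    using idem_IN_le_coord_perm_id[OF le_qp bij_betw_trans[OF p q] idem _ x(2)] by simp
  then have "\<forall>k<n. p k = inv_into {..<n} q k"
    using inv_into_f_eq[OF bij_betw_imp_inj_on[OF q]] p_into by (metis lessThan_iff)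
  then show "\<sigma> = coord_perm n (inv_into {..<n} q)" using \<sigma>_eq coord_perm_cong by blast
next
  assume "\<sigma> = coord_perm n (inv_into {..<n} q)"
  then have "pmult \<alpha> \<sigma> \<subseteq>\<^sub>m pid n"
    using pmult_mono[OF le map_le_refl[of \<sigma>]] pmult_coord_perm_inv(1)[OF q] by simp
  then show "idem_IN (pmult \<alpha> \<sigma>)" by (rule idem_IN_if_le_pid)
qed

theorem lemma3p4:
  fixes n :: nat and \<alpha> :: "nat list \<rightharpoonup> nat list"
  assumes "n \<ge> 2" and "\<alpha> \<in> IN_inf n"
  shows "(\<exists>!\<sigma>l. \<sigma>l \<in> units_IN n \<and> idem_IN (pmult \<sigma>l \<alpha>))
       \<and> (\<exists>!\<sigma>r. \<sigma>r \<in> units_IN n \<and> idem_IN (pmult \<alpha> \<sigma>r))"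
proof -
  obtain q where q: "bij_betw q {..<n} {..<n}" and le: "\<alpha> \<subseteq>\<^sub>m coord_perm n q"
    using IN_inf_le_coord_perm[OF assms] by blast
  have "coord_perm n (inv_into {..<n} q) \<in> units_IN n"
    using coord_perm_in_units[OF bij_betw_inv_into[OF q]] .
  then show ?thesis
    using idem_IN_left_unit_iff[OF assms q le] idem_IN_right_unit_iff[OF assms q le] by blast
qed

end
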